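(* In the directed variant of the greedy routing network creation game on any finite point set in any metric space, the Price of Anarchy equals $1$: every pure Nash equilibrium $\mathbf s$ satisfies $c(\mathbf s)=c(\mathbf s^* )$ where $\mathbf s^*$ is a social optimum.
   Context: Let $\mathcal P$ be a finite set of $n\ge2$ points (agents) in a metric space with metric $d$. In the directed variant each agent $u$ chooses a strategy $S_u\subseteq\{(u,v):v\in\mathcal P\setminus\{u\}\}$ of directed edges, which it owns. A profile $\mathbf s=(S_u)_u$ induces the directed network $G(\mathbf s)=(\mathcal P,\bigcup_u S_u)$. A greedy routing path from $u$ to $w$ is a directed path $(x_1=u,\dots,x_j=w)$ in $G(\mathbf s)$ with $d(x_i,w)>d(x_{i+1},w)$ for all $i$; $u$ is greedy connected if it has a greedy routing path to every other agent. The cost of $u$ is $c_u(\mathbf s)=|S_u|$ if $u$ is greedy connected and $\infty$ otherwise; the social cost is $c(\mathbf s)=\sum_u c_u(\mathbf s)$. A pure Nash equilibrium (NE) is a profile in which no agent can strictly decrease its cost by unilaterally changing its strategy; a social optimum minimizes social cost. The Price of Anarchy is the worst-case ratio $c(\mathbf s)/c(\mathbf s^* )$ over NE $\mathbf s$ and instances, where $\mathbf s^*$ is a social optimum. *)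

theory Defs
  imports "HOL-Analysis.Analysis" "HOL-Library.Extended_Nat"
begin

text \<open>Directed greedy routing network creation game on a finite point set P
 of a metric space. A strategy profile s assigns to each agent u the set s u
 of heads v of the directed edges (u,v) that u owns.\<close>

definition valid_profile :: "'a set \<Rightarrow> ('a \<Rightarrow> 'a set) \<Rightarrow> bool" where
  "valid_profile P s \<longleftrightarrow> (\<forall>u\<in>P. s u \<subseteq> P - {u}) \<and> (\<forall>u. u \<notin> P \<longrightarrow> s u = {})"

definition edges :: "'a set \<Rightarrow> ('a \<Rightarrow> 'a set) \<Rightarrow> ('a \<times> 'a) set" where
  "edges P s = {(u, v). u \<in> P \<and> v \<in> s u}"

definition greedy_path :: "'a::metric_space set \<Rightarrow> ('a \<Rightarrow> 'a set) \<Rightarrow> 'a list \<Rightarrow> 'a \<Rightarrow> 'a \<Rightarrow> bool" where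
  "greedy_path P s xs u w \<longleftrightarrow> xs \<noteq> [] \<and> hd xs = u \<and> last xs = w \<and> set xs \<subseteq> P \<and>
     (\<forall>i. Suc i < length xs \<longrightarrow>
        (xs ! i, xs ! Suc i) \<in> edges P s \<and> dist (xs ! i) w > dist (xs ! Suc i) w)"

definition greedy_connected :: "'a::metric_space set \<Rightarrow> ('a \<Rightarrow> 'a set) \<Rightarrow> 'a \<Rightarrow> bool" where
  "greedy_connected P s u \<longleftrightarrow> (\<forall>w\<in>P - {u}. \<exists>xs. greedy_path P s xs u w)"

definition agent_cost :: "'a::metric_space set \<Rightarrow> ('a \<Rightarrow> 'a set) \<Rightarrow> 'a \<Rightarrow> enat" where
  "agent_cost P s u = (if greedy_connected P s u then enat (card (s u)) else \<infinity>)"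

definition social_cost :: "'a::metric_space set \<Rightarrow> ('a \<Rightarrow> 'a set) \<Rightarrow> enat" where
  "social_cost P s = (\<Sum>u\<in>P. agent_cost P s (u::'a::metric_space))"

definition nash_equilibrium :: "'a::metric_space set \<Rightarrow> ('a \<Rightarrow> 'a set) \<Rightarrow> bool" where
  "nash_equilibrium P s \<longleftrightarrow> valid_profile P s \<and>
     (\<forall>u\<in>P. \<forall>S. S \<subseteq> P - {u} \<longrightarrow> agent_cost P (s(u := S)) (u::'a::metric_space) \<ge> agent_cost P s u)"

definition social_optimum :: "'a::metric_space set \<Rightarrow> ('a \<Rightarrow> 'a set) \<Rightarrow> bool" where
  "social_optimum P s \<longleftrightarrow> valid_profile P s \<and>
     (\<forall>s'. valid_profile P s' \<longrightarrow> social_cost P s \<le> social_cost P (s'::'a::metric_space \<Rightarrow> 'a set))"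

end

theory Submission
  imports Defs
begin

text \<open>In a Nash equilibrium every agent is greedy connected, since buying all edges
  would make it so. Hence any agent u may copy its strategy from an arbitrary profile s'
  in which it is greedy connected: the first hop x of a greedy path from u to w in s'
  is one of u's new edges and is closer to w than u, and it is continued by a greedy
  path from x to w in the equilibrium, which never returns to u because distances to w
  decrease along it. So every agent pays at most its cost in s', and an equilibrium is
  a social optimum.\<close>

lemma greedy_path_dist_le:
  assumes "greedy_path P s xs x w" "i < length xs"
  shows "dist (xs ! i) w \<le> dist x w"
  using assms(2)
proof (induction i)
  case 0
  then show ?case using assms(1) by (cases xs) (auto simp: greedy_path_def)
next
  case (Suc i)
  then have "dist (xs ! Suc i) w < dist (xs ! i) w"
    using assms(1) unfolding greedy_path_def by blast
  then show ?case using Suc by simp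
qed

lemma greedy_path_edge:
  assumes "u \<in> P" "w \<in> P" "u \<noteq> w" "w \<in> s u"
  shows "greedy_path P s [u, w] u w"
  using assms unfolding greedy_path_def edges_def by (auto simp: less_Suc_eq)

lemma greedy_path_first_hop:
  assumes "greedy_path P s xs u w" "u \<noteq> w"
  obtains x where "x \<in> s u" "x \<in> P" "dist x w < dist u w"
proof -
  have "xs \<noteq> []" "hd xs = u" "last xs = w"
    using assms(1) unfolding greedy_path_def by auto
  then have "Suc 0 < length xs" using assms(2) by (cases xs) auto
  then have "(xs ! 0, xs ! 1) \<in> edges P s" "dist (xs ! 1) w < dist (xs ! 0) w"
    using assms(1) unfolding greedy_path_def by auto
  moreover have "xs ! 0 = u" using \<open>xs \<noteq> []\<close> \<open>hd xs = u\<close> by (cases xs) auto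
  moreover have "xs ! 1 \<in> P"
    using \<open>Suc 0 < length xs\<close> assms(1) unfolding greedy_path_def by (auto dest: nth_mem)
  ultimately show thesis using that unfolding edges_def by auto
qed

lemma greedy_path_Cons:
  assumes "greedy_path P s xs x w" "u \<in> P" "x \<in> S" "dist x w < dist u w"
  shows "greedy_path P (s(u := S)) (u # xs) u w"
proof -
  have u_notin: "u \<notin> set xs"
    using greedy_path_dist_le[OF assms(1)] assms(4) by (fastforce simp: in_set_conv_nth)
  have xs: "xs \<noteq> []" "xs ! 0 = x" "last xs = w" "set xs \<subseteq> P"
    using assms(1) unfolding greedy_path_def by (auto simp: hd_conv_nth)
  have "((u # xs) ! i, (u # xs) ! Suc i) \<in> edges P (s(u := S)) \<and>
        dist ((u # xs) ! Suc i) w < dist ((u # xs) ! i) w"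
    if i: "Suc i < length (u # xs)" for i
  proof (cases i)
    case 0
    then show ?thesis using xs assms(2-4) by (simp add: edges_def)
  next
    case (Suc j)
    then have j: "Suc j < length xs" using i by simp
    then have "(xs ! j, xs ! Suc j) \<in> edges P s" "dist (xs ! Suc j) w < dist (xs ! j) w"
      using assms(1) unfolding greedy_path_def by blast+
    moreover have "xs ! j \<noteq> u" using u_notin j by (metis Suc_lessD nth_mem)
    ultimately show ?thesis using Suc by (simp add: edges_def)
  qed
  then show ?thesis using xs assms(2) unfolding greedy_path_def by simp
qed

lemma greedy_connected_if_all_edges:
  assumes "u \<in> P" "P - {u} \<subseteq> s u"
  shows "greedy_connected P s u"
  using assms greedy_path_edge[of u P _ s] unfolding greedy_connected_def by blast

lemma greedy_connected_fun_upd: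
  assumes "greedy_connected P s' u" "u \<in> P"
    and "\<And>x. x \<in> s' u \<Longrightarrow> x \<in> P \<Longrightarrow> greedy_connected P s x"
  shows "greedy_connected P (s(u := s' u)) u"
  unfolding greedy_connected_def
proof
  fix w assume w: "w \<in> P - {u}"
  then obtain xs where "greedy_path P s' xs u w"
    using assms(1) unfolding greedy_connected_def by blast
  then obtain x where x: "x \<in> s' u" "x \<in> P" "dist x w < dist u w"
    using w by (auto elim: greedy_path_first_hop)
  show "\<exists>ys. greedy_path P (s(u := s' u)) ys u w"
  proof (cases "x = w")
    case True
    then show ?thesis using greedy_path_edge[of u P w "s(u := s' u)"] w x assms(2) by auto
  next
    case False
    then obtain ys where "greedy_path P s ys x w"
      using assms(3)[OF x(1,2)] w unfolding greedy_connected_def by blast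
    then show ?thesis using greedy_path_Cons[OF _ assms(2) x(1,3)] by blast
  qed
qed

lemma nash_equilibrium_greedy_connected:
  assumes "nash_equilibrium P s" "u \<in> P"
  shows "greedy_connected P s u"
proof -
  have "agent_cost P s u \<le> agent_cost P (s(u := P - {u})) u"
    using assms unfolding nash_equilibrium_def by blast
  moreover have "greedy_connected P (s(u := P - {u})) u"
    using assms(2) by (intro greedy_connected_if_all_edges) auto
  ultimately show ?thesis unfolding agent_cost_def by (auto split: if_splits)
qed

lemma nash_equilibrium_agent_cost_le:
  assumes "nash_equilibrium P s" "valid_profile P s'" "u \<in> P"
  shows "agent_cost P s u \<le> agent_cost P s' u"
proof (cases "greedy_connected P s' u")
  case True
  have "s' u \<subseteq> P - {u}" using assms(2,3) unfolding valid_profile_def by blast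
  then have "agent_cost P s u \<le> agent_cost P (s(u := s' u)) u"
    using assms(1,3) unfolding nash_equilibrium_def by blast
  moreover have "greedy_connected P (s(u := s' u)) u"
    using greedy_connected_fun_upd[OF True assms(3)] nash_equilibrium_greedy_connected[OF assms(1)]
    by blast
  ultimately show ?thesis using True unfolding agent_cost_def by (auto split: if_splits)
qed (simp add: agent_cost_def)

lemma nash_equilibrium_social_cost_le:
  assumes "nash_equilibrium P s" "valid_profile P s'"
  shows "social_cost P s \<le> social_cost P s'"
  unfolding social_cost_def
  using nash_equilibrium_agent_cost_le[OF assms] by (intro sum_mono) auto

theorem mainTheorem6:
  fixes P :: "'a::metric_space set" and s sopt :: "'a \<Rightarrow> 'a set"
  assumes "finite P" and "card P \<ge> 2"
    and "nash_equilibrium P s"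
    and "social_optimum P sopt"
  shows "social_cost P s = social_cost P sopt"
proof (rule antisym)
  show "social_cost P s \<le> social_cost P sopt"
    using assms(3,4) nash_equilibrium_social_cost_le unfolding social_optimum_def by blast
  show "social_cost P sopt \<le> social_cost P s"
    using assms(3,4) unfolding social_optimum_def nash_equilibrium_def by blast
qed

end
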